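(* Let $n\ge3$ and let $\Gamma$ be a $\mathbb{D}_n$-symmetric billiard curve. Let $H=\langle\rho,\sigma\rangle\subset\mathbb{D}_n$ be a dihedral subgroup of order $2N$ with $N\ge3$, generated by a rotation $\rho$ of order $N$ and a reflection $\sigma$. Let $z\in\Gamma^{\mathbb{Z}}$ be a billiard sequence of minimal period $p\ge3$ with spatiotemporal symmetry group $H(z)=H$. Then: - $p$ is an integer multiple of $N$; - there is a unique $1\le M\le N-1$ with $\gcd(M,N)=1$ such that $\rho^M(z_i)=z_{p/N+i}$ for all $i$; - there is a unique $0\le k<p$ such that $\sigma(z_i)=z_{k-i}$ for all $i$.
   Context: $\mathbb{D}_n=\langle R,S\rangle$, where $R$ is rotation by $2\pi/n$ and $S$ is the horizontal reflection. A $\mathbb{D}_n$-symmetric billiard curve is a $C^2$ simple closed $\mathbb{D}_n$-invariant curve bounding a strictly convex domain. A billiard sequence is $z\in\Gamma^{\mathbb{Z}}$ with $z_i\ne z_{i+1}$. The spatiotemporal symmetry group $H(z)$ is the set of $h\in\mathbb{D}_n$ for which there is $k\in\mathbb{Z}$ with $h(z_i)=z_{k+i}$ for all $i$ (time-preserving) or $h(z_i)=z_{k-i}$ for all $i$ (time-reversing). *)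

theory Defs
  imports "HOL-Analysis.Analysis"
begin

text \<open>Group of maps generated by a set of maps (closure under composition, containing id).
  For generators of finite order this is the generated group.\<close>
inductive_set gen_maps :: "('a \<Rightarrow> 'a) set \<Rightarrow> ('a \<Rightarrow> 'a) set" for G where
  gen_id: "id \<in> gen_maps G"
| gen_comp: "g \<in> G \<Longrightarrow> f \<in> gen_maps G \<Longrightarrow> g \<circ> f \<in> gen_maps G"

definition rotR :: "nat \<Rightarrow> complex \<Rightarrow> complex" where
  "rotR n = (\<lambda>z. cis (2 * pi / real n) * z)"

definition reflS :: "complex \<Rightarrow> complex" where
  "reflS = cnj"

definition Dn :: "nat \<Rightarrow> (complex \<Rightarrow> complex) set" where
  "Dn n = gen_maps {rotR n, reflS}"

definition is_rotation :: "(complex \<Rightarrow> complex) \<Rightarrow> bool" where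
  "is_rotation f \<longleftrightarrow> (\<exists>\<theta>. f = (\<lambda>z. cis \<theta> * z))"

definition is_reflection :: "(complex \<Rightarrow> complex) \<Rightarrow> bool" where
  "is_reflection f \<longleftrightarrow> (\<exists>\<theta>. f = (\<lambda>z. cis \<theta> * cnj z))"

definition C2_simple_closed_curve :: "complex set \<Rightarrow> bool" where
  "C2_simple_closed_curve \<Gamma> \<longleftrightarrow>
     (\<exists>\<gamma> \<gamma>' \<gamma>''. (\<forall>t. \<gamma> (t + 1) = \<gamma> t)
        \<and> (\<forall>t. (\<gamma> has_vector_derivative \<gamma>' t) (at t))
        \<and> (\<forall>t. (\<gamma>' has_vector_derivative \<gamma>'' t) (at t))
        \<and> continuous_on UNIV \<gamma>''
        \<and> (\<forall>t. \<gamma>' t \<noteq> 0)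
        \<and> inj_on \<gamma> {0..<1}
        \<and> \<Gamma> = \<gamma> ` {0..1})"

definition bounds_strictly_convex_domain :: "complex set \<Rightarrow> bool" where
  "bounds_strictly_convex_domain \<Gamma> \<longleftrightarrow>
     (\<exists>K. open K \<and> bounded K \<and> K \<noteq> {} \<and> convex K \<and> frontier K = \<Gamma>
        \<and> (\<forall>x\<in>closure K. \<forall>y\<in>closure K. x \<noteq> y \<longrightarrow> open_segment x y \<subseteq> K))"

definition Dn_billiard_curve :: "nat \<Rightarrow> complex set \<Rightarrow> bool" where
  "Dn_billiard_curve n \<Gamma> \<longleftrightarrow> C2_simple_closed_curve \<Gamma> \<and> bounds_strictly_convex_domain \<Gamma>
     \<and> (\<forall>g\<in>Dn n. g ` \<Gamma> = \<Gamma>)"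

definition billiard_sequence :: "complex set \<Rightarrow> (int \<Rightarrow> complex) \<Rightarrow> bool" where
  "billiard_sequence \<Gamma> z \<longleftrightarrow> (\<forall>i. z i \<in> \<Gamma>) \<and> (\<forall>i. z i \<noteq> z (i + 1))"

definition minimal_period :: "(int \<Rightarrow> 'a) \<Rightarrow> nat \<Rightarrow> bool" where
  "minimal_period z p \<longleftrightarrow> p > 0 \<and> (\<forall>i. z (i + int p) = z i)
     \<and> (\<forall>q. 0 < q \<and> q < p \<longrightarrow> \<not> (\<forall>i. z (i + int q) = z i))"

definition st_symmetry_group :: "nat \<Rightarrow> (int \<Rightarrow> complex) \<Rightarrow> (complex \<Rightarrow> complex) set" where
  "st_symmetry_group n z = {h \<in> Dn n. \<exists>k::int.
      (\<forall>i. h (z i) = z (k + i)) \<or> (\<forall>i. h (z i) = z (k - i))}"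

end

theory Submission
  imports Defs
begin

text \<open>
  A rotation fixing two distinct points is the identity, so a power of \<open>\<rho>\<close> fixes the
  sequence only if it is trivial. Hence \<open>\<rho>\<close> cannot reverse time (that would give
  \<open>\<rho>\<^sup>2 = id\<close>) and acts as a time shift by some \<open>a\<close>, with \<open>\<rho>\<^sup>j = id\<close> exactly when
  \<open>p\<close> divides \<open>j a\<close>. So \<open>N\<close> is the additive order of \<open>a\<close> modulo \<open>p\<close>, i.e.
  \<open>p = gcd a p \<cdot> N\<close>, and \<open>M\<close> is the inverse of \<open>a / gcd a p\<close> modulo \<open>N\<close>. If \<open>\<sigma>\<close>
  preserved time with shift \<open>b\<close>, the involutions \<open>\<sigma>\<close> and \<open>\<rho> \<circ> \<sigma>\<close> would give
  \<open>p | 2b\<close> and \<open>p | 2(a + b)\<close>, hence \<open>p | 2a\<close> and again \<open>\<rho>\<^sup>2 = id\<close>.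
\<close>

lemma periodic_shift_mult:
  fixes z :: "int \<Rightarrow> 'a" and c m :: int
  assumes "\<forall>i. z (i + c) = z i"
  shows "z (i + m * c) = z i"
proof (induction m rule: int_induct[of _ 0])
  case base
  then show ?case by simp
next
  case (step1 m)
  have "z (i + (m + 1) * c) = z ((i + m * c) + c)" by (simp add: algebra_simps)
  then show ?case using assms step1 by simp
next
  case (step2 m)
  have "z (i + m * c) = z ((i + (m - 1) * c) + c)" by (simp add: algebra_simps)
  then show ?case using assms step2 by simp
qed

lemma minimal_period_shift_iff:
  assumes "minimal_period z p"
  shows "(\<forall>i. z (x + i) = z (y + i)) \<longleftrightarrow> int p dvd x - y"
proof
  assume shift: "\<forall>i. z (x + i) = z (y + i)"
  have periodic: "\<forall>i. z (i + int p) = z i" and "p > 0"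
    using assms by (auto simp: minimal_period_def)
  define r where "r = (x - y) mod int p"
  have r: "0 \<le> r" "r < int p" using \<open>p > 0\<close> by (auto simp: r_def)
  have "z (i + int (nat r)) = z i" for i
  proof -
    have "z (i + r) = z ((i + r) + ((x - y) div int p) * int p)"
      using periodic_shift_mult[OF periodic] by simp
    also have "\<dots> = z (x + (i - y))" by (simp add: r_def algebra_simps)
    also have "\<dots> = z i" using shift by simp
    finally show ?thesis using r by simp
  qed
  then have "\<not> (0 < nat r \<and> nat r < p)" using assms unfolding minimal_period_def by blast
  then have "r = 0" using r by linarith
  then show "int p dvd x - y" by (simp add: r_def dvd_eq_mod_eq_0)
next
  assume "int p dvd x - y"
  then obtain m where m: "x = y + m * int p" by (metis add.commute diff_add_cancel dvdE mult.commute)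
  have "\<forall>i. z (i + int p) = z i" using assms by (simp add: minimal_period_def)
  from periodic_shift_mult[OF this, of "y + i" m for i]
  show "\<forall>i. z (x + i) = z (y + i)" by (simp add: m algebra_simps)
qed

lemma funpow_shift:
  assumes "\<forall>i. f (z i) = z (a + i)"
  shows "(f ^^ j) (z i) = z (int j * a + i)"
  by (induction j) (simp_all add: assms algebra_simps)

lemma reversing_offset_unique:
  assumes period: "minimal_period z p" and rev: "\<forall>i. f (z i) = z (k - i)"
  shows "\<exists>!k'. 0 \<le> k' \<and> k' < int p \<and> (\<forall>i. f (z i) = z (k' - i))"
proof -
  have "p > 0" using period by (simp add: minimal_period_def)
  have offset_iff: "(\<forall>i. f (z i) = z (k' - i)) \<longleftrightarrow> int p dvd k - k'" for k'
  proof -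
    have "(\<forall>i. f (z i) = z (k' - i)) \<longleftrightarrow> (\<forall>i. z (k + i) = z (k' + i))"
      using rev by (metis add_uminus_conv_diff minus_minus)
    then show ?thesis using minimal_period_shift_iff[OF period] by simp
  qed
  show ?thesis
  proof (rule ex1I)
    show "0 \<le> k mod int p \<and> k mod int p < int p \<and> (\<forall>i. f (z i) = z (k mod int p - i))"
      using \<open>p > 0\<close> offset_iff by (simp add: mod_eq_dvd_iff[symmetric])
  next
    fix k' assume "0 \<le> k' \<and> k' < int p \<and> (\<forall>i. f (z i) = z (k' - i))"
    then show "k' = k mod int p"
      using offset_iff by (simp add: mod_eq_dvd_iff[symmetric])
  qed
qed

lemma gen_maps_generator: "g \<in> G \<Longrightarrow> g \<in> gen_maps G"
  using gen_maps.gen_comp[OF _ gen_maps.gen_id] by fastforce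

lemma is_rotation_funpow:
  assumes "is_rotation f"
  shows "is_rotation (f ^^ j)"
proof -
  obtain \<theta> where f: "f = (\<lambda>w. cis \<theta> * w)" using assms by (auto simp: is_rotation_def)
  have "f ^^ j = (\<lambda>w. cis \<theta> ^ j * w)" by (induction j) (simp_all add: f fun_eq_iff)
  then have "f ^^ j = (\<lambda>w. cis (real j * \<theta>) * w)" by (simp only: Complex.DeMoivre)
  then show ?thesis unfolding is_rotation_def by blast
qed

lemma is_rotation_fixing_two_points:
  assumes "is_rotation f" "f x = x" "f y = y" "x \<noteq> y"
  shows "f = id"
proof -
  obtain \<theta> where f: "f = (\<lambda>w. cis \<theta> * w)" using assms(1) by (auto simp: is_rotation_def)
  have "cis \<theta> = 1" using assms(2-4) by (auto simp: f)
  then show ?thesis by (simp add: f id_def)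
qed

lemma is_reflection_involutive:
  assumes "is_reflection s"
  shows "s (s w) = w"
proof -
  obtain \<theta> where s: "s = (\<lambda>w. cis \<theta> * cnj w)" using assms by (auto simp: is_reflection_def)
  have "s (s w) = cis \<theta> * cis (- \<theta>) * w" by (simp add: s cis_cnj)
  then show ?thesis by (simp add: cis_mult)
qed

lemma is_reflection_rotation_comp:
  assumes "is_rotation r" "is_reflection s"
  shows "is_reflection (r \<circ> s)"
proof -
  obtain \<alpha> \<beta> where "r = (\<lambda>w. cis \<alpha> * w)" "s = (\<lambda>w. cis \<beta> * cnj w)"
    using assms by (auto simp: is_rotation_def is_reflection_def)
  then have "r \<circ> s = (\<lambda>w. cis (\<alpha> + \<beta>) * cnj w)" by (auto simp: cis_mult[symmetric])
  then show ?thesis by (auto simp: is_reflection_def)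
qed

lemma dvd_mult_iff_dvd_div_gcd:
  fixes a p j :: int
  assumes "p \<noteq> 0"
  shows "p dvd j * a \<longleftrightarrow> p div gcd a p dvd j"
proof -
  define g where "g = gcd a p"
  have "g \<noteq> 0" using assms by (simp add: g_def)
  have a: "a = g * (a div g)" and p: "p = g * (p div g)" by (simp_all add: g_def)
  have "coprime (a div g) (p div g)" using assms by (simp add: g_def div_gcd_coprime)
  have "p dvd j * a \<longleftrightarrow> g * (p div g) dvd g * (j * (a div g))"
    by (subst a, subst p) (simp add: ac_simps)
  also have "\<dots> \<longleftrightarrow> p div g dvd j * (a div g)" using \<open>g \<noteq> 0\<close> by simp
  also have "\<dots> \<longleftrightarrow> p div g dvd j"
    using \<open>coprime (a div g) (p div g)\<close> by (simp add: coprime_commute coprime_dvd_mult_left_iff)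
  finally show ?thesis by (simp add: g_def)
qed

lemma additive_order_mod:
  fixes a p :: int and N :: nat
  assumes "p > 0" "N > 0" "p dvd int N * a" "\<forall>j. 0 < j \<and> j < N \<longrightarrow> \<not> p dvd int j * a"
  shows "p = gcd a p * int N"
proof -
  define d where "d = p div gcd a p"
  have "d > 0" using assms(1) by (simp add: d_def pos_imp_zdiv_pos_iff zdvd_imp_le)
  have "d dvd int N" using assms(1,3) by (simp add: d_def dvd_mult_iff_dvd_div_gcd)
  then have "d \<le> int N" using assms(2) by (simp add: zdvd_imp_le)
  moreover have "\<not> d < int N"
  proof
    assume "d < int N"
    then have "\<not> p dvd int (nat d) * a" using assms(4)[rule_format, of "nat d"] \<open>d > 0\<close> by simp
    then show False using assms(1) \<open>d > 0\<close> by (simp add: d_def dvd_mult_iff_dvd_div_gcd)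
  qed
  ultimately have "d = int N" by simp
  then show ?thesis by (metis d_def dvd_div_mult_self gcd_dvd2 mult.commute)
qed

lemma unique_inverse_mod:
  fixes b :: int and N :: nat
  assumes "coprime b (int N)" "N \<ge> 2"
  shows "\<exists>!M::nat. 1 \<le> M \<and> M \<le> N - 1 \<and> coprime M N \<and> int N dvd int M * b - 1"
proof -
  have unique: "M1 = M2"
    if "M1 < N" "int N dvd int M1 * b - 1" "M2 < N" "int N dvd int M2 * b - 1" for M1 M2 :: nat
  proof -
    have "int N dvd (int M1 - int M2) * b"
      using dvd_diff[OF that(2) that(4)] by (simp add: algebra_simps)
    then have "int N dvd int M1 - int M2"
      using assms(1) by (simp add: coprime_commute coprime_dvd_mult_left_iff)
    then have "int M1 mod int N = int M2 mod int N" by (simp add: mod_eq_dvd_iff)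
    then show ?thesis using that(1,3) by simp
  qed
  obtain u v where "u * b + v * int N = 1" using bezout_int[of b "int N"] assms(1) by auto
  define M where "M = nat (u mod int N)"
  have M: "int M = u mod int N" "M < N" using assms(2) by (simp_all add: M_def nat_less_iff)
  have "int M * b - 1 = int N * (- v - (u div int N) * b)"
    using \<open>u * b + v * int N = 1\<close> by (simp add: M(1) minus_mult_div_eq_mod [symmetric] algebra_simps)
  then have inverse: "int N dvd int M * b - 1" by simp
  have "M \<noteq> 0"
  proof
    assume "M = 0"
    then have "int N dvd 1" using inverse by simp
    then show False using assms(2) by simp
  qed
  have "coprime (int M) (int N)"
  proof (rule coprimeI)
    fix e assume "e dvd int M" "e dvd int N"
    then have "e dvd int M * b - (int M * b - 1)" using inverse by (meson dvd_diff dvd_mult2 dvd_trans)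
    then show "is_unit e" by simp
  qed
  then have "coprime M N" by simp
  then show ?thesis using M(2) \<open>M \<noteq> 0\<close> inverse unique by (intro ex1I[of _ M]) auto
qed


lemma unique_multiple_congruent_gcd:
  fixes a p :: int and N :: nat
  assumes "p > 0" "p = gcd a p * int N" "N \<ge> 2"
  shows "\<exists>!M::nat. 1 \<le> M \<and> M \<le> N - 1 \<and> coprime M N \<and> p dvd int M * a - gcd a p"
proof -
  define g where "g = gcd a p"
  have "g > 0" using assms(1) by (simp add: g_def)
  have a: "a = g * (a div g)" by (simp add: g_def)
  have "p div g = int N"
    using assms(2) \<open>g > 0\<close> by (metis g_def less_irrefl nonzero_mult_div_cancel_left)
  then have "coprime (a div g) (int N)" using assms(1) by (metis g_def div_gcd_coprime less_irrefl)
  have "p dvd int M * a - g \<longleftrightarrow> int N dvd int M * (a div g) - 1" for M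
  proof -
    have "p dvd int M * a - g \<longleftrightarrow> g * int N dvd g * (int M * (a div g) - 1)"
      using assms(2) by (subst a) (simp add: g_def algebra_simps)
    then show ?thesis using \<open>g > 0\<close> by simp
  qed
  then show ?thesis
    using unique_inverse_mod[OF \<open>coprime (a div g) (int N)\<close> assms(3)] by (simp add: g_def)
qed

lemma rotation_power_eq_id_iff:
  assumes period: "minimal_period z p" and "z 0 \<noteq> z 1" and "is_rotation \<rho>"
    and shift: "\<forall>i. \<rho> (z i) = z (a + i)"
  shows "\<rho> ^^ j = id \<longleftrightarrow> int p dvd int j * a"
proof
  assume "\<rho> ^^ j = id"
  then have "\<forall>i. z (int j * a + i) = z (0 + i)" using funpow_shift[OF shift] by (metis id_apply add_0)
  then show "int p dvd int j * a" using minimal_period_shift_iff[OF period, of "int j * a" 0] by simp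
next
  assume "int p dvd int j * a"
  then have "(\<rho> ^^ j) (z i) = z i" for i
    using funpow_shift[OF shift] minimal_period_shift_iff[OF period, of "int j * a" 0] by simp
  then show "\<rho> ^^ j = id"
    using is_rotation_fixing_two_points[OF is_rotation_funpow] assms(2,3) by blast
qed

lemma rotation_not_time_reversing:
  fixes z :: "int \<Rightarrow> complex"
  assumes "z 0 \<noteq> z 1" "is_rotation \<rho>" "\<rho> ^^ 2 \<noteq> id"
  shows "\<not> (\<forall>i. \<rho> (z i) = z (k - i))"
proof
  assume "\<forall>i. \<rho> (z i) = z (k - i)"
  then have "(\<rho> ^^ 2) (z i) = z i" for i by (simp add: numeral_2_eq_2)
  then show False using is_rotation_fixing_two_points[OF is_rotation_funpow] assms by blast
qed

lemma involution_shift_dvd: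
  assumes period: "minimal_period z p" and "\<forall>w. f (f w) = w" and "\<forall>i. f (z i) = z (b + i)"
  shows "int p dvd 2 * b"
proof -
  have "\<forall>i. z (2 * b + i) = z (0 + i)" using assms(2,3) by (metis add.assoc add_0 mult_2)
  then show ?thesis using minimal_period_shift_iff[OF period, of "2 * b" 0] by simp
qed

lemma reflection_not_time_preserving:
  assumes period: "minimal_period z p" and "is_rotation \<rho>" and rot: "\<forall>i. \<rho> (z i) = z (a + i)"
    and "\<not> int p dvd 2 * a" and "is_reflection \<sigma>"
  shows "\<not> (\<forall>i. \<sigma> (z i) = z (b + i))"
proof
  assume refl: "\<forall>i. \<sigma> (z i) = z (b + i)"
  have "int p dvd 2 * b"
    using involution_shift_dvd[OF period _ refl] is_reflection_involutive[OF assms(5)] by blast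
  moreover have "int p dvd 2 * (a + b)"
  proof (rule involution_shift_dvd[OF period])
    show "\<forall>w. (\<rho> \<circ> \<sigma>) ((\<rho> \<circ> \<sigma>) w) = w"
      using is_reflection_involutive[OF is_reflection_rotation_comp[OF assms(2,5)]] by blast
    show "\<forall>i. (\<rho> \<circ> \<sigma>) (z i) = z (a + b + i)" using rot refl by (simp add: add.assoc)
  qed
  ultimately have "int p dvd 2 * a" by (metis add_diff_cancel_right' distrib_left dvd_diff)
  then show False using assms(4) by contradiction
qed

theorem mainTheorem9:
  fixes n N p :: nat and \<Gamma> :: "complex set" and \<rho> \<sigma> :: "complex \<Rightarrow> complex"
    and z :: "int \<Rightarrow> complex"
  assumes "n \<ge> 3"
    and "Dn_billiard_curve n \<Gamma>"
    and "N \<ge> 3"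
    and "\<rho> \<in> Dn n" and "is_rotation \<rho>"
    and "\<rho> ^^ N = id" and "\<forall>j. 0 < j \<and> j < N \<longrightarrow> \<rho> ^^ j \<noteq> id"
    and "\<sigma> \<in> Dn n" and "is_reflection \<sigma>"
    and "card (gen_maps {\<rho>, \<sigma>}) = 2 * N"
    and "billiard_sequence \<Gamma> z"
    and "minimal_period z p" and "p \<ge> 3"
    and "st_symmetry_group n z = gen_maps {\<rho>, \<sigma>}"
  shows "N dvd p
    \<and> (\<exists>!M::nat. 1 \<le> M \<and> M \<le> N - 1 \<and> coprime M N
          \<and> (\<forall>i. (\<rho> ^^ M) (z i) = z (int (p div N) + i)))
    \<and> (\<exists>!k::int. 0 \<le> k \<and> k < int p \<and> (\<forall>i. \<sigma> (z i) = z (k - i)))"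
proof -
  note period = assms(12)
  have "p > 0" using period by (simp add: minimal_period_def)
  have "z 0 \<noteq> z 1" using assms(11) unfolding billiard_sequence_def by (metis add_0)
  have symmetry: "\<exists>k. (\<forall>i. h (z i) = z (k + i)) \<or> (\<forall>i. h (z i) = z (k - i))" if "h \<in> {\<rho>, \<sigma>}" for h
    using gen_maps_generator[OF that] assms(14) by (auto simp: st_symmetry_group_def)
  have "\<rho> ^^ 2 \<noteq> id" using assms(3,7) by simp
  then obtain a where rot: "\<forall>i. \<rho> (z i) = z (a + i)"
    using symmetry[of \<rho>] rotation_not_time_reversing[OF \<open>z 0 \<noteq> z 1\<close> assms(5)] by blast
  note rot_id_iff = rotation_power_eq_id_iff[OF period \<open>z 0 \<noteq> z 1\<close> assms(5) rot]
  have p_eq: "int p = gcd a (int p) * int N"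
    using additive_order_mod[of "int p" N a] \<open>p > 0\<close> assms(3,6,7) rot_id_iff by simp
  then have "N dvd p" by (metis dvd_triv_right of_nat_dvd_iff)
  have p_div_N: "int (p div N) = gcd a (int p)" using p_eq assms(3)
    by (metis nonzero_mult_div_cancel_right not_numeral_le_zero of_nat_eq_0_iff zdiv_int)
  have "(\<forall>i. (\<rho> ^^ M) (z i) = z (int (p div N) + i)) \<longleftrightarrow> int p dvd int M * a - gcd a (int p)" for M
    using minimal_period_shift_iff[OF period] by (simp add: funpow_shift[OF rot] p_div_N)
  then have rotation_part: "\<exists>!M::nat. 1 \<le> M \<and> M \<le> N - 1 \<and> coprime M N
      \<and> (\<forall>i. (\<rho> ^^ M) (z i) = z (int (p div N) + i))"
    using unique_multiple_congruent_gcd[OF _ p_eq] \<open>p > 0\<close> assms(3) by simp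
  obtain b where "\<forall>i. \<sigma> (z i) = z (b - i)"
    using symmetry[of \<sigma>] reflection_not_time_preserving[OF period assms(5) rot _ assms(9)]
      rot_id_iff[of 2] \<open>\<rho> ^^ 2 \<noteq> id\<close> by auto
  then have reflection_part: "\<exists>!k::int. 0 \<le> k \<and> k < int p \<and> (\<forall>i. \<sigma> (z i) = z (k - i))"
    by (rule reversing_offset_unique[OF period])
  show ?thesis using \<open>N dvd p\<close> rotation_part reflection_part by blast
qed

end
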